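(* Let $X$ and $Y$ be non-negative absolutely continuous random variables with $X\le_{disp}Y$. Then (A) $R^\alpha_\beta(X)\le R^\alpha_\beta(Y)$ if $\{\alpha<1,\ \beta\ge1\}$ or $\{\alpha>1,\ \beta\ge 1\}$; (B) $R^\alpha_\beta(X)\ge R^\alpha_\beta(Y)$ if $\{\alpha<1,\ \beta<1\}$ or $\{\alpha>1,\ \beta<1\}$, where $0<\alpha$, $\alpha\ne1$, $\beta>0$.
   Context: For a non-negative absolutely continuous random variable $X$ with PDF $f$, the Rényi information generating function is $R^\alpha_\beta(X)=\frac{1}{1-\alpha}\left(\int_0^\infty f^\alpha(x)\,dx\right)^{\beta-1}$ for $0<\alpha<\infty$, $\alpha\ne1$, $\beta>0$; all integrals are assumed finite. If $X,Y$ have PDFs $f,g$ and CDFs $F,G$, then $X$ is smaller than $Y$ in the dispersive order, $X\le_{disp}Y$, if $g(G^{-1}(u))\le f(F^{-1}(u))$ for all $u\in(0,1)$, where $F^{-1}(u)=\inf\{x:F(x)\ge u\}$. *)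

theory Defs
  imports "HOL-Probability.Probability"
begin

definition renyi_igf :: "real \<Rightarrow> real \<Rightarrow> (real \<Rightarrow> real) \<Rightarrow> real" where
  "renyi_igf \<alpha> \<beta> f = (1 / (1 - \<alpha>)) * (LBINT x:{0..}. f x powr \<alpha>) powr (\<beta> - 1)"

definition quantile :: "(real \<Rightarrow> real) \<Rightarrow> real \<Rightarrow> real" where
  "quantile F u = Inf {x. u \<le> F x}"

text \<open>Dispersive order X <=_disp Y, in terms of PDFs f, g and CDFs F, G.\<close>
definition disp_le :: "(real \<Rightarrow> real) \<Rightarrow> (real \<Rightarrow> real) \<Rightarrow> (real \<Rightarrow> real) \<Rightarrow> (real \<Rightarrow> real) \<Rightarrow> bool" where
  "disp_le f F g G \<longleftrightarrow> (\<forall>u\<in>{0<..<1}. g (quantile G u) \<le> f (quantile F u))"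

end

theory Submission
  imports Defs
begin

text \<open>The quantile function Q = F^-1 pushes the uniform distribution on (0,1) forward to the law
  of X, so writing f^\<alpha> = f * f^(\<alpha> - 1) gives
  int_0^oo f(x)^\<alpha> dx = int_0^1 f(Q(u))^(\<alpha> - 1) du, and likewise for Y.
  The dispersive order compares the two integrands pointwise, so the integral for X is the
  smaller one when \<alpha> < 1 and the larger one when \<alpha> > 1 (in the first case one also needs
  g(G^-1(u)) > 0 for almost every u). Since R^\<alpha>_\<beta> is this integral raised to the power \<beta> - 1
  and scaled by 1/(1 - \<alpha>), whose sign flips at \<alpha> = 1 exactly as the comparison does, the
  direction of the inequality is decided by the sign of \<beta> - 1 alone.\<close>

lemma measurable_quantile_cdf:
  assumes "real_distribution \<mu>"
  shows "quantile (cdf \<mu>) \<in> borel_measurable (restrict_space lborel {0<..<1})"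
proof -
  interpret cdf_distribution \<mu>
    using assms by (simp add: cdf_distribution_def)
  show ?thesis
    using measurable_CI unfolding quantile_def[abs_def]
    by (simp add: measurable_cong_sets[OF sets_restrict_space_cong[OF sets_lborel] refl])
qed

lemma distr_quantile_cdf:
  assumes "real_distribution \<mu>"
  shows "distr (restrict_space lborel {0<..<1}) borel (quantile (cdf \<mu>)) = \<mu>"
proof -
  interpret cdf_distribution \<mu>
    using assms by (simp add: cdf_distribution_def)
  show ?thesis
    using distr_I_eq_M unfolding quantile_def[abs_def] .
qed

lemma nn_integral_density_quantile:
  fixes f h :: "real \<Rightarrow> ennreal"
  assumes dist: "real_distribution (density lborel f)"
    and [measurable]: "f \<in> borel_measurable borel" "h \<in> borel_measurable borel"
  shows "(\<integral>\<^sup>+x. f x * h x \<partial>lborel)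
    = (\<integral>\<^sup>+u. h (quantile (cdf (density lborel f)) u) \<partial>restrict_space lborel {0<..<1})"
proof -
  have [measurable]:
    "quantile (cdf (density lborel f)) \<in> borel_measurable (restrict_space lborel {0<..<1})"
    using measurable_quantile_cdf[OF dist] .
  have "(\<integral>\<^sup>+u. h (quantile (cdf (density lborel f)) u) \<partial>restrict_space lborel {0<..<1})
      = (\<integral>\<^sup>+x. h x \<partial>distr (restrict_space lborel {0<..<1}) borel (quantile (cdf (density lborel f))))"
    by (rule nn_integral_distr[symmetric]) simp_all
  also have "\<dots> = (\<integral>\<^sup>+x. h x \<partial>density lborel f)"
    unfolding distr_quantile_cdf[OF dist] ..
  also have "\<dots> = (\<integral>\<^sup>+x. f x * h x \<partial>lborel)"
    by (simp add: nn_integral_density)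
  finally show ?thesis ..
qed

lemma AE_quantile_density_pos:
  fixes f :: "real \<Rightarrow> ennreal"
  assumes dist: "real_distribution (density lborel f)" and [measurable]: "f \<in> borel_measurable borel"
  shows "AE u in restrict_space lborel {0<..<1}. 0 < f (quantile (cdf (density lborel f)) u)"
proof -
  have "AE x in distr (restrict_space lborel {0<..<1}) borel (quantile (cdf (density lborel f))).
      0 < f x"
    unfolding distr_quantile_cdf[OF dist] by (simp add: AE_density)
  then show ?thesis
    by (simp add: AE_distr_iff[OF measurable_quantile_cdf[OF dist]])
qed

lemma nn_integral_powr_density_quantile:
  fixes f :: "real \<Rightarrow> real"
  assumes dist: "real_distribution (density lborel f)" and nonneg: "\<And>x. 0 \<le> f x"
    and [measurable]: "f \<in> borel_measurable borel"
  shows "(\<integral>\<^sup>+x. f x powr \<alpha> \<partial>lborel)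
    = (\<integral>\<^sup>+u. f (quantile (cdf (density lborel f)) u) powr (\<alpha> - 1) \<partial>restrict_space lborel {0<..<1})"
proof -
  \<comment> \<open>Where f vanishes both sides are 0, because 0 powr a = 0 for every exponent a.\<close>
  have "ennreal (f x powr \<alpha>) = ennreal (f x) * ennreal (f x powr (\<alpha> - 1))" for x
  proof (cases "f x = 0")
    case False
    then have "f x powr \<alpha> = f x * f x powr (\<alpha> - 1)"
      using nonneg[of x] by (simp add: powr_diff)
    then show ?thesis
      using nonneg[of x] by (simp add: ennreal_mult)
  qed simp
  then show ?thesis
    using nn_integral_density_quantile[OF dist, of "\<lambda>x. ennreal (f x powr (\<alpha> - 1))"] by simp
qed

lemma nn_integral_powr_density_pos:
  fixes f :: "real \<Rightarrow> real"
  assumes dist: "real_distribution (density lborel f)" and nonneg: "\<And>x. 0 \<le> f x"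
    and [measurable]: "f \<in> borel_measurable borel"
  shows "0 < (\<integral>\<^sup>+x. f x powr \<alpha> \<partial>lborel)"
proof (rule ccontr)
  let ?\<Omega> = "restrict_space lborel {0<..<1::real}"
  interpret \<Omega>: prob_space ?\<Omega>
    by (auto simp: emeasure_restrict_space space_restrict_space intro!: prob_spaceI)
  have [measurable]: "quantile (cdf (density lborel f)) \<in> borel_measurable ?\<Omega>"
    using measurable_quantile_cdf[OF dist] .
  assume "\<not> 0 < (\<integral>\<^sup>+x. f x powr \<alpha> \<partial>lborel)"
  then have "AE u in ?\<Omega>. ennreal (f (quantile (cdf (density lborel f)) u) powr (\<alpha> - 1)) = 0"
    by (simp add: nn_integral_powr_density_quantile[OF dist nonneg] nn_integral_0_iff_AE)
  moreover have "AE u in ?\<Omega>. 0 < f (quantile (cdf (density lborel f)) u)"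
    using AE_quantile_density_pos[OF dist] by simp
  ultimately have "AE u in ?\<Omega>. False"
    by eventually_elim simp
  then show False
    by simp
qed

lemma distributed_distr_borel_eq_density:
  "distributed M lborel X f \<Longrightarrow> distr M borel X = density lborel f"
  by (metis distributed_distr_eq_density distr_cong sets_lborel)

lemma set_integral_powr_eq_nn_integral:
  fixes X :: "'a \<Rightarrow> real" and f :: "real \<Rightarrow> real"
  assumes X_nonneg: "\<forall>\<omega>\<in>space M. 0 \<le> X \<omega>" and nonneg: "\<And>x. 0 \<le> f x"
    and distributed: "distributed M lborel X (\<lambda>x. ennreal (f x))"
    and integrable: "set_integrable lborel {0..} (\<lambda>x. f x powr \<alpha>)"
  shows "ennreal (LBINT x:{0..}. f x powr \<alpha>) = (\<integral>\<^sup>+x. f x powr \<alpha> \<partial>lborel)"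
proof -
  have [measurable]: "f \<in> borel_measurable borel" "X \<in> borel_measurable M"
    using distributed_real_measurable[OF _ distributed] distributed_measurable[OF distributed] nonneg
    by simp_all
  have "AE x in distr M borel X. 0 \<le> x"
    using X_nonneg by (subst AE_distr_iff) auto
  then have "AE x in density lborel f. 0 \<le> x"
    unfolding distributed_distr_borel_eq_density[OF distributed] .
  then have "AE x in lborel. 0 < f x \<longrightarrow> 0 \<le> x"
    by (subst (asm) AE_density) auto
  then have "AE x in lborel. indicator {0..} x *\<^sub>R f x powr \<alpha> = f x powr \<alpha>"
  proof eventually_elim
    case (elim x)
    then show ?case
      using nonneg[of x] by (cases "0 \<le> x") (auto simp: indicator_def)
  qed
  then have "(\<integral>\<^sup>+x. f x powr \<alpha> \<partial>lborel) = (\<integral>\<^sup>+x. indicator {0..} x *\<^sub>R f x powr \<alpha> \<partial>lborel)"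
    by (intro nn_integral_cong_AE) auto
  also have "\<dots> = ennreal (LBINT x:{0..}. f x powr \<alpha>)"
    using integrable unfolding set_lebesgue_integral_def set_integrable_def
    by (rule nn_integral_eq_integral) (simp add: indicator_def)
  finally show ?thesis ..
qed

lemma set_integral_powr_density_quantile:
  fixes M :: "'a measure" and X :: "'a \<Rightarrow> real" and f :: "real \<Rightarrow> real"
  assumes "prob_space M" and "\<forall>\<omega>\<in>space M. 0 \<le> X \<omega>" and nonneg: "\<And>x. 0 \<le> f x"
    and distributed: "distributed M lborel X (\<lambda>x. ennreal (f x))"
    and "set_integrable lborel {0..} (\<lambda>x. f x powr \<alpha>)"
  defines "Q \<equiv> quantile (cdf (distr M borel X))"
  shows "ennreal (LBINT x:{0..}. f x powr \<alpha>)
      = (\<integral>\<^sup>+u. f (Q u) powr (\<alpha> - 1) \<partial>restrict_space lborel {0<..<1})"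
    and "0 < (LBINT x:{0..}. f x powr \<alpha>)"
    and "AE u in restrict_space lborel {0<..<1}. 0 < f (Q u)"
proof -
  have meas: "f \<in> borel_measurable borel"
    using distributed_real_measurable[OF _ distributed] nonneg by simp
  have distr_eq: "distr M borel X = density lborel f"
    using distributed_distr_borel_eq_density[OF distributed] .
  have "X \<in> borel_measurable M"
    using distributed_measurable[OF distributed] by simp
  then have "real_distribution (distr M borel X)"
    by (rule prob_space.real_distribution_distr[OF \<open>prob_space M\<close>])
  then have dist: "real_distribution (density lborel f)"
    by (simp only: distr_eq)
  have integral_eq: "ennreal (LBINT x:{0..}. f x powr \<alpha>) = (\<integral>\<^sup>+x. f x powr \<alpha> \<partial>lborel)"
    using set_integral_powr_eq_nn_integral assms by blast
  then show "ennreal (LBINT x:{0..}. f x powr \<alpha>)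
      = (\<integral>\<^sup>+u. f (Q u) powr (\<alpha> - 1) \<partial>restrict_space lborel {0<..<1})"
    unfolding Q_def distr_eq using nn_integral_powr_density_quantile[OF dist nonneg meas] by simp
  show "0 < (LBINT x:{0..}. f x powr \<alpha>)"
    using nn_integral_powr_density_pos[OF dist nonneg meas, of \<alpha>] unfolding integral_eq[symmetric]
    by simp
  show "AE u in restrict_space lborel {0<..<1}. 0 < f (Q u)"
    unfolding Q_def distr_eq using AE_quantile_density_pos[OF dist] meas by simp
qed

lemma nn_integral_powr_mono:
  fixes \<phi> \<psi> :: "'a \<Rightarrow> real"
  assumes "0 \<le> p" and "\<And>u. u \<in> space M \<Longrightarrow> 0 \<le> \<phi> u \<and> \<phi> u \<le> \<psi> u"
  shows "(\<integral>\<^sup>+u. \<phi> u powr p \<partial>M) \<le> (\<integral>\<^sup>+u. \<psi> u powr p \<partial>M)"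
  using assms by (intro nn_integral_mono ennreal_leI powr_mono2) auto

lemma nn_integral_powr_antimono:
  fixes \<phi> \<psi> :: "'a \<Rightarrow> real"
  assumes "p \<le> 0" and "AE u in M. 0 < \<phi> u" and "\<And>u. u \<in> space M \<Longrightarrow> \<phi> u \<le> \<psi> u"
  shows "(\<integral>\<^sup>+u. \<psi> u powr p \<partial>M) \<le> (\<integral>\<^sup>+u. \<phi> u powr p \<partial>M)"
  using AE_space[of M] assms(2)
proof (intro nn_integral_mono_AE, eventually_elim)
  case (elim u)
  then show ?case
    using assms by (intro ennreal_leI powr_mono2') auto
qed

lemma renyi_igf_mono:
  fixes f g :: "real \<Rightarrow> real" and \<alpha> \<beta> :: real
  defines "a \<equiv> LBINT x:{0..}. f x powr \<alpha>" and "b \<equiv> LBINT x:{0..}. g x powr \<alpha>"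
  assumes "0 < a" and "0 < b" and "\<alpha> < 1 \<Longrightarrow> a \<le> b" and "1 < \<alpha> \<Longrightarrow> b \<le> a" and "\<alpha> \<noteq> 1"
  shows "1 \<le> \<beta> \<Longrightarrow> renyi_igf \<alpha> \<beta> f \<le> renyi_igf \<alpha> \<beta> g"
    and "\<beta> < 1 \<Longrightarrow> renyi_igf \<alpha> \<beta> g \<le> renyi_igf \<alpha> \<beta> f"
proof -
  have igf: "renyi_igf \<alpha> \<beta> f = 1 / (1 - \<alpha>) * a powr (\<beta> - 1)"
    "renyi_igf \<alpha> \<beta> g = 1 / (1 - \<alpha>) * b powr (\<beta> - 1)"
    by (simp_all add: renyi_igf_def a_def b_def)
  consider (lt) "\<alpha> < 1" "a \<le> b" | (gt) "1 < \<alpha>" "b \<le> a"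
    using assms by fastforce
  note cases = this
  show "renyi_igf \<alpha> \<beta> f \<le> renyi_igf \<alpha> \<beta> g" if "1 \<le> \<beta>"
    using cases
  proof cases
    case lt
    then have "a powr (\<beta> - 1) \<le> b powr (\<beta> - 1)"
      using \<open>0 < a\<close> that by (intro powr_mono2) auto
    then show ?thesis
      unfolding igf using lt by (intro mult_left_mono) auto
  next
    case gt
    then have "b powr (\<beta> - 1) \<le> a powr (\<beta> - 1)"
      using \<open>0 < b\<close> that by (intro powr_mono2) auto
    then show ?thesis
      unfolding igf using gt by (intro mult_left_mono_neg) auto
  qed
  show "renyi_igf \<alpha> \<beta> g \<le> renyi_igf \<alpha> \<beta> f" if "\<beta> < 1"
    using cases
  proof cases
    case lt
    then have "b powr (\<beta> - 1) \<le> a powr (\<beta> - 1)"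
      using \<open>0 < a\<close> that by (intro powr_mono2') auto
    then show ?thesis
      unfolding igf using lt by (intro mult_left_mono) auto
  next
    case gt
    then have "a powr (\<beta> - 1) \<le> b powr (\<beta> - 1)"
      using \<open>0 < b\<close> that by (intro powr_mono2') auto
    then show ?thesis
      unfolding igf using gt by (intro mult_left_mono_neg) auto
  qed
qed

theorem proposition2p5:
  fixes M :: "'a measure" and N :: "'b measure" and X :: "'a \<Rightarrow> real" and Y :: "'b \<Rightarrow> real" and f g :: "real \<Rightarrow> real"
    and \<alpha> \<beta> :: real
  assumes "prob_space M" and "prob_space N"
    and "\<forall>\<omega>\<in>space M. X \<omega> \<ge> 0" and "\<forall>\<omega>\<in>space N. Y \<omega> \<ge> 0"
    and "\<forall>x. f x \<ge> 0" and "\<forall>x. g x \<ge> 0"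
    and "distributed M lborel X (\<lambda>x. ennreal (f x))"
    and "distributed N lborel Y (\<lambda>x. ennreal (g x))"
    and "set_integrable lborel {0..} (\<lambda>x. f x powr \<alpha>)"
    and "set_integrable lborel {0..} (\<lambda>x. g x powr \<alpha>)"
    and "disp_le f (cdf (distr M borel X)) g (cdf (distr N borel Y))"
    and "0 < \<alpha>" and "\<alpha> \<noteq> 1" and "0 < \<beta>"
  shows "(((\<alpha> < 1 \<and> \<beta> \<ge> 1) \<or> (\<alpha> > 1 \<and> \<beta> \<ge> 1)) \<longrightarrow> renyi_igf \<alpha> \<beta> f \<le> renyi_igf \<alpha> \<beta> g) \<and>
    (((\<alpha> < 1 \<and> \<beta> < 1) \<or> (\<alpha> > 1 \<and> \<beta> < 1)) \<longrightarrow> renyi_igf \<alpha> \<beta> f \<ge> renyi_igf \<alpha> \<beta> g)"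
proof -
  define QF where "QF = quantile (cdf (distr M borel X))"
  define QG where "QG = quantile (cdf (distr N borel Y))"
  note F = set_integral_powr_density_quantile[OF assms(1,3) assms(5)[rule_format] assms(7,9),
      folded QF_def]
  note G = set_integral_powr_density_quantile[OF assms(2,4) assms(6)[rule_format] assms(8,10),
      folded QG_def]
  have disp: "\<And>u. u \<in> space (restrict_space lborel {0<..<1}) \<Longrightarrow> g (QG u) \<le> f (QF u)"
    using assms(11) by (simp add: disp_le_def QF_def QG_def space_restrict_space)
  have "(LBINT x:{0..}. g x powr \<alpha>) \<le> (LBINT x:{0..}. f x powr \<alpha>)" if "1 < \<alpha>"
  proof -
    have "ennreal (LBINT x:{0..}. g x powr \<alpha>) \<le> ennreal (LBINT x:{0..}. f x powr \<alpha>)"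
      unfolding F(1) G(1) using that disp assms(6) by (intro nn_integral_powr_mono) auto
    then show ?thesis
      using F(2) by simp
  qed
  moreover have "(LBINT x:{0..}. f x powr \<alpha>) \<le> (LBINT x:{0..}. g x powr \<alpha>)" if "\<alpha> < 1"
  proof -
    have "ennreal (LBINT x:{0..}. f x powr \<alpha>) \<le> ennreal (LBINT x:{0..}. g x powr \<alpha>)"
      unfolding F(1) G(1) using that disp G(3) by (intro nn_integral_powr_antimono) auto
    then show ?thesis
      using G(2) by simp
  qed
  ultimately show ?thesis
    using renyi_igf_mono[OF F(2) G(2)] \<open>\<alpha> \<noteq> 1\<close> by auto
qed

end
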